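(* Let $X$ be a real Banach space such that for every $\varepsilon>0$, every finite dimensional subspace $Z$ of $X$ and every $n\in\mathbb N$ there exists a linear operator $T:\ell_\infty^n\to X$ with $\|T\|\le1$ such that $\|z+T(y)\|\ge(1-\varepsilon)(\|z\|+\|y\|)$ for every $y\in\ell_\infty^n$ and every $z\in Z$. Then for every non-zero real Banach space $Y$ and every closed subspace $H$ of $L(Y,X)$ containing $F(Y,X)$, the norm of $H$ (the operator norm) is octahedral.
   Context: $L(Y,X)$ is the space of bounded linear operators from $Y$ to $X$ with the operator norm and $F(Y,X)$ is its subspace of finite-rank operators. A Banach space $W$ is octahedral if for every finite dimensional subspace $E$ of $W$ and every $\varepsilon>0$ there exists $y\in W$, $\|y\|=1$, with $\|x+\lambda y\|\ge(1-\varepsilon)(\|x\|+|\lambda|)$ for all $x\in E$, $\lambda\in\mathbb R$. *)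

theory Defs
  imports "HOL-Analysis.Analysis"
begin

definition fin_dim_subspace :: "'a::real_vector set \<Rightarrow> bool" where
  "fin_dim_subspace E \<longleftrightarrow> (\<exists>B. finite B \<and> E = span B)"

(* sup-norm of ell_infty^n, where a vector of ell_infty^n is represented by its
   coordinates a 0, ..., a (n-1) (values of a at indices >= n are ignored) *)
definition linf_norm :: "nat \<Rightarrow> (nat \<Rightarrow> real) \<Rightarrow> real" where
  "linf_norm n a = Max (insert 0 {\<bar>a i\<bar> | i. i < n})"

(* the linear operator ell_infty^n -> X sending the i-th unit vector to x i;
   every linear operator ell_infty^n -> X is of this form *)
definition linf_op :: "nat \<Rightarrow> (nat \<Rightarrow> 'a::real_vector) \<Rightarrow> (nat \<Rightarrow> real) \<Rightarrow> 'a" where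
  "linf_op n x a = (\<Sum>i<n. a i *\<^sub>R x i)"

definition finite_rank :: "('a::real_normed_vector \<Rightarrow>\<^sub>L 'b::real_normed_vector) \<Rightarrow> bool" where
  "finite_rank T \<longleftrightarrow> (\<exists>B. finite B \<and> range (blinfun_apply T) \<subseteq> span B)"

definition octahedral :: "'a::real_normed_vector set \<Rightarrow> bool" where
  "octahedral H \<longleftrightarrow>
     (\<forall>E \<epsilon>. E \<subseteq> H \<and> fin_dim_subspace E \<and> \<epsilon> > 0 \<longrightarrow>
        (\<exists>y\<in>H. norm y = 1 \<and>
           (\<forall>x\<in>E. \<forall>t::real. norm (x + t *\<^sub>R y) \<ge> (1 - \<epsilon>) * (norm x + \<bar>t\<bar>))))"

end

theory Submission
  imports Defs
begin

(*
  Given a finite-dimensional E \<subseteq> H and d > 0, take a finite d-net N of the unit sphere of E.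
  For T \<in> N pick a unit vector y_T with \<parallel>T y_T\<parallel> \<ge> \<parallel>T\<parallel> - d and, by Hahn-Banach, a norm-one
  functional F_T with F_T y_T = 1. The hypothesis applied to Z = span {T y_T | T \<in> N} yields
  x_1, ..., x_n spanning an almost isometric, almost l1-complemented copy of l\<infinity>^n, so
  S v = \<Sum>_j F_j(v) x_j is a finite-rank operator of norm \<le> 1 with
  \<parallel>T y_T + c S y_T\<parallel> \<ge> (1 - d)(\<parallel>T y_T\<parallel> + |c|). Evaluating T + s S at y_T shows that the
  normalised S is almost l1-orthogonal to every T \<in> N, hence to the whole unit sphere of E.
*)

text \<open>\<open>G\<close> is the graph of a linear functional on a subspace, bounded by the norm.\<close>

definition norm_dominated_graph :: "('a::real_normed_vector \<times> real) set \<Rightarrow> bool" where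
  "norm_dominated_graph G \<longleftrightarrow> (0, 0) \<in> G \<and>
     (\<forall>u a v b c. (u, a) \<in> G \<longrightarrow> (v, b) \<in> G \<longrightarrow> (u + c *\<^sub>R v, a + c * b) \<in> G) \<and>
     (\<forall>v r. (v, r) \<in> G \<longrightarrow> r \<le> norm v)"

lemma norm_dominated_graphD:
  assumes "norm_dominated_graph G"
  shows "(0, 0) \<in> G"
    and "(u, a) \<in> G \<Longrightarrow> (v, b) \<in> G \<Longrightarrow> (u + c *\<^sub>R v, a + c * b) \<in> G"
    and "(v, r) \<in> G \<Longrightarrow> r \<le> norm v"
  using assms unfolding norm_dominated_graph_def by blast+

lemma norm_dominated_graph_unique:
  assumes G: "norm_dominated_graph G" and "(v, r) \<in> G" "(v, s) \<in> G"
  shows "r = s"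
proof -
  have "(v + (-1) *\<^sub>R v, r + (-1) * s) \<in> G" "(v + (-1) *\<^sub>R v, s + (-1) * r) \<in> G"
    using norm_dominated_graphD(2)[OF G] assms(2,3) by blast+
  then have "r - s \<le> 0" "s - r \<le> 0"
    using norm_dominated_graphD(3)[OF G] by force+
  then show ?thesis by simp
qed

lemma norm_dominated_graph_gap:
  assumes G: "norm_dominated_graph G"
  obtains k where "\<And>u a. (u, a) \<in> G \<Longrightarrow> a - norm (u - w) \<le> k"
    and "\<And>v b. (v, b) \<in> G \<Longrightarrow> k \<le> norm (v + w) - b"
proof
  define S where "S = {a - norm (u - w) | u a. (u, a) \<in> G}"
  have below: "s \<le> norm (v + w) - b" if "s \<in> S" "(v, b) \<in> G" for s v b
  proof -
    obtain u a where s: "s = a - norm (u - w)" and ua: "(u, a) \<in> G"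
      using \<open>s \<in> S\<close> unfolding S_def by blast
    have "(u + 1 *\<^sub>R v, a + 1 * b) \<in> G"
      using norm_dominated_graphD(2)[OF G ua that(2)] .
    then have "a + b \<le> norm (u + v)"
      using norm_dominated_graphD(3)[OF G] by simp
    also have "\<dots> \<le> norm (u - w) + norm (v + w)"
      using norm_triangle_ineq[of "u - w" "v + w"] by simp
    finally show ?thesis using s by simp
  qed
  have "S \<noteq> {}" using norm_dominated_graphD(1)[OF G] unfolding S_def by blast
  then show "Sup S \<le> norm (v + w) - b" if "(v, b) \<in> G" for v b
    using below that by (intro cSup_least) auto
  show "a - norm (u - w) \<le> Sup S" if "(u, a) \<in> G" for u a
    using that below[OF _ norm_dominated_graphD(1)[OF G]]
    by (intro cSup_upper) (auto simp: S_def bdd_above_def)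
qed

lemma norm_dominated_graph_extension_bound:
  assumes G: "norm_dominated_graph G"
    and lower: "\<And>u a. (u, a) \<in> G \<Longrightarrow> a - norm (u - w) \<le> k"
    and upper: "\<And>v b. (v, b) \<in> G \<Longrightarrow> k \<le> norm (v + w) - b"
    and ua: "(u, a) \<in> G"
  shows "a + c * k \<le> norm (u + c *\<^sub>R w)"
proof -
  have scaled: "((1 / c) *\<^sub>R u, (1 / c) * a) \<in> G" for c
    using norm_dominated_graphD(2)[OF G norm_dominated_graphD(1)[OF G] ua, of "1 / c"] by simp
  show ?thesis
  proof (cases c "0::real" rule: linorder_cases)
    case less
    have "(1 / - c) * a - norm ((1 / - c) *\<^sub>R u - w) \<le> k"
      by (rule lower[OF scaled])
    then have "- c * ((1 / - c) * a - norm ((1 / - c) *\<^sub>R u - w)) \<le> - c * k"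
      using less by (intro mult_left_mono) auto
    moreover have "- c * norm ((1 / - c) *\<^sub>R u - w) = norm ((- c) *\<^sub>R ((1 / - c) *\<^sub>R u - w))"
      using less by simp
    moreover have "(- c) *\<^sub>R ((1 / - c) *\<^sub>R u - w) = u + c *\<^sub>R w"
      using less by (simp add: algebra_simps)
    ultimately show ?thesis
      using less by (simp add: algebra_simps)
  next
    case equal
    then show ?thesis using norm_dominated_graphD(3)[OF G ua] by simp
  next
    case greater
    have "c * k \<le> c * (norm ((1 / c) *\<^sub>R u + w) - (1 / c) * a)"
      using upper[OF scaled] greater by (intro mult_left_mono) auto
    moreover have "c * norm ((1 / c) *\<^sub>R u + w) = norm (c *\<^sub>R ((1 / c) *\<^sub>R u + w))"
      using greater by simp
    moreover have "c *\<^sub>R ((1 / c) *\<^sub>R u + w) = u + c *\<^sub>R w"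
      using greater by (simp add: algebra_simps)
    ultimately show ?thesis
      using greater by (simp add: algebra_simps)
  qed
qed

lemma norm_dominated_graph_extend:
  assumes G: "norm_dominated_graph G"
    and lower: "\<And>u a. (u, a) \<in> G \<Longrightarrow> a - norm (u - w) \<le> k"
    and upper: "\<And>v b. (v, b) \<in> G \<Longrightarrow> k \<le> norm (v + w) - b"
  shows "norm_dominated_graph {(u + c *\<^sub>R w, a + c * k) | u a c. (u, a) \<in> G}"
  unfolding norm_dominated_graph_def
proof (intro conjI allI impI)
  show "(0, 0) \<in> {(u + c *\<^sub>R w, a + c * k) | u a c. (u, a) \<in> G}"
    using norm_dominated_graphD(1)[OF G] by force
next
  fix u a v b c
  assume "(u, a) \<in> {(u + c *\<^sub>R w, a + c * k) | u a c. (u, a) \<in> G}"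
    and "(v, b) \<in> {(u + c *\<^sub>R w, a + c * k) | u a c. (u, a) \<in> G}"
  then obtain u1 a1 c1 u2 a2 c2 where G12: "(u1, a1) \<in> G" "(u2, a2) \<in> G"
    and "u = u1 + c1 *\<^sub>R w" "a = a1 + c1 * k" "v = u2 + c2 *\<^sub>R w" "b = a2 + c2 * k"
    by blast
  then have "u + c *\<^sub>R v = (u1 + c *\<^sub>R u2) + (c1 + c * c2) *\<^sub>R w"
    and "a + c * b = (a1 + c * a2) + (c1 + c * c2) * k"
    by (simp_all add: algebra_simps)
  with norm_dominated_graphD(2)[OF G G12]
  show "(u + c *\<^sub>R v, a + c * b) \<in> {(u + c *\<^sub>R w, a + c * k) | u a c. (u, a) \<in> G}"
    by blast
next
  fix v r
  assume "(v, r) \<in> {(u + c *\<^sub>R w, a + c * k) | u a c. (u, a) \<in> G}"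
  then show "r \<le> norm v"
    using norm_dominated_graph_extension_bound[OF G lower upper] by blast
qed

lemma norm_dominated_graph_Union:
  assumes "C \<noteq> {}" "subset.chain {G. norm_dominated_graph G} C"
  shows "norm_dominated_graph (\<Union>C)"
proof -
  have C: "\<And>G. G \<in> C \<Longrightarrow> norm_dominated_graph G"
    and chain: "\<And>G G'. G \<in> C \<Longrightarrow> G' \<in> C \<Longrightarrow> G \<subseteq> G' \<or> G' \<subseteq> G"
    using assms(2) unfolding subset_chain_def by auto
  show ?thesis
    unfolding norm_dominated_graph_def
  proof (intro conjI allI impI)
    show "(0, 0) \<in> \<Union>C" using assms(1) C norm_dominated_graphD(1) by blast
  next
    fix u a v b c
    assume "(u, a) \<in> \<Union>C" "(v, b) \<in> \<Union>C"
    then obtain G G' where "G \<in> C" "G' \<in> C" "(u, a) \<in> G" "(v, b) \<in> G'" by blast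
    with chain[of G G'] C show "(u + c *\<^sub>R v, a + c * b) \<in> \<Union>C"
      by (metis UnionI norm_dominated_graphD(2) subsetD)
  next
    fix v r
    assume "(v, r) \<in> \<Union>C"
    then show "r \<le> norm v" using C norm_dominated_graphD(3) by blast
  qed
qed

lemma norm_dominated_graph_line: "norm_dominated_graph {(c *\<^sub>R y0, c * norm y0) | c. True}"
  unfolding norm_dominated_graph_def
proof (intro conjI allI impI)
  show "(0, 0) \<in> {(c *\<^sub>R y0, c * norm y0) | c. True}"
    by (intro CollectI exI[of _ 0]) simp
next
  fix u a v b c
  assume "(u, a) \<in> {(c *\<^sub>R y0, c * norm y0) | c. True}"
    and "(v, b) \<in> {(c *\<^sub>R y0, c * norm y0) | c. True}"
  then obtain c1 c2 where "u = c1 *\<^sub>R y0" "a = c1 * norm y0" "v = c2 *\<^sub>R y0" "b = c2 * norm y0"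
    by auto
  then show "(u + c *\<^sub>R v, a + c * b) \<in> {(c *\<^sub>R y0, c * norm y0) | c. True}"
    by (intro CollectI exI[of _ "c1 + c * c2"]) (simp add: algebra_simps)
next
  fix v r
  assume "(v, r) \<in> {(c *\<^sub>R y0, c * norm y0) | c. True}"
  then show "r \<le> norm v" by (auto simp: mult_right_mono)
qed

lemma norm_dominated_graph_total_functional:
  assumes G: "norm_dominated_graph G" and total: "\<And>w. \<exists>r. (w, r) \<in> G"
  obtains f where "linear f" "\<And>v. \<bar>f v\<bar> \<le> norm v" "\<And>v. (v, f v) \<in> G"
proof
  define f where "f v = (THE r. (v, r) \<in> G)" for v
  have f: "(v, r) \<in> G \<longleftrightarrow> f v = r" for v r
    using total[of v] norm_dominated_graph_unique[OF G] unfolding f_def by (metis theI)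
  have add: "f (u + v) = f u + f v" and scale: "f (c *\<^sub>R v) = c * f v" for u v c
    using norm_dominated_graphD(2)[OF G f[THEN iffD2] f[THEN iffD2], of u "f u" v "f v" 1]
      norm_dominated_graphD(2)[OF G norm_dominated_graphD(1)[OF G] f[THEN iffD2], of v "f v" c]
    by (simp_all add: f)
  show "linear f" by (rule linearI) (simp_all add: add scale)
  show "\<bar>f v\<bar> \<le> norm v" for v
    using norm_dominated_graphD(3)[OF G, of v] norm_dominated_graphD(3)[OF G, of "- v"]
      f scale[of "-1" v] by force
  show "(v, f v) \<in> G" for v using f by blast
qed

text \<open>Hahn--Banach for the line through \<open>y0\<close>: by Zorn's lemma there is a maximal dominated graph
  containing \<open>(y0, norm y0)\<close>, and it is total since otherwise it could be extended.\<close>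

lemma exists_norming_functional:
  fixes y0 :: "'a::real_normed_vector"
  obtains f where "linear f" "\<And>v. \<bar>f v\<bar> \<le> norm v" "f y0 = norm y0"
proof -
  define good where "good G \<longleftrightarrow> norm_dominated_graph G \<and> (y0, norm y0) \<in> G"
    for G :: "('a \<times> real) set"
  have "good {(c *\<^sub>R y0, c * norm y0) | c. True}"
    unfolding good_def using norm_dominated_graph_line by (force intro: exI[of _ 1])
  then have "\<exists>M\<in>Collect good. \<forall>G\<in>Collect good. M \<subseteq> G \<longrightarrow> G = M"
  proof (intro subset_Zorn)
    fix C assume C: "subset.chain (Collect good) C"
    show "\<exists>U\<in>Collect good. \<forall>G\<in>C. G \<subseteq> U"
    proof (cases "C = {}")
      case False
      have "subset.chain {G. norm_dominated_graph G} C" "\<forall>G\<in>C. (y0, norm y0) \<in> G"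
        using C unfolding subset_chain_def good_def by auto
      with False have "good (\<Union>C)"
        unfolding good_def using norm_dominated_graph_Union by blast
      then show ?thesis by blast
    qed (use \<open>good _\<close> in blast)
  qed
  then obtain M where M: "norm_dominated_graph M" "(y0, norm y0) \<in> M"
    and maximal: "\<And>G. good G \<Longrightarrow> M \<subseteq> G \<Longrightarrow> G = M"
    unfolding good_def by auto
  have "\<exists>r. (w, r) \<in> M" for w
  proof -
    obtain k where "\<And>u a. (u, a) \<in> M \<Longrightarrow> a - norm (u - w) \<le> k"
      and "\<And>v b. (v, b) \<in> M \<Longrightarrow> k \<le> norm (v + w) - b"
      using norm_dominated_graph_gap[OF M(1)] by blast
    with M(1) have ext: "norm_dominated_graph {(u + c *\<^sub>R w, a + c * k) | u a c. (u, a) \<in> M}"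
      by (rule norm_dominated_graph_extend)
    have "M \<subseteq> {(u + c *\<^sub>R w, a + c * k) | u a c. (u, a) \<in> M}"
      by (force intro: exI[of _ 0])
    moreover from this M(2) have "(y0, norm y0) \<in> {(u + c *\<^sub>R w, a + c * k) | u a c. (u, a) \<in> M}"
      by (rule subsetD)
    ultimately have "{(u + c *\<^sub>R w, a + c * k) | u a c. (u, a) \<in> M} = M"
      using ext by (intro maximal) (simp_all add: good_def)
    moreover have "(w, k) \<in> {(u + c *\<^sub>R w, a + c * k) | u a c. (u, a) \<in> M}"
      using norm_dominated_graphD(1)[OF M(1)] by (force intro: exI[of _ 1])
    ultimately show ?thesis by auto
  qed
  then obtain f where "linear f" "\<And>v. \<bar>f v\<bar> \<le> norm v" "\<And>v. (v, f v) \<in> M"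
    using norm_dominated_graph_total_functional[OF M(1)] by blast
  moreover have "f y0 = norm y0"
    using norm_dominated_graph_unique[OF M(1) \<open>(y0, f y0) \<in> M\<close> M(2)] .
  ultimately show ?thesis using that by blast
qed

lemma compact_coefficient_box:
  "compact (PiE UNIV (\<lambda>b. if b \<in> B then {-R..R} else {0::real}))"
proof -
  have "compactin (product_topology (\<lambda>_. euclidean) UNIV)
      (PiE UNIV (\<lambda>b. if b \<in> B then {-R..R} else {0::real}))"
    unfolding compactin_PiE by (auto simp: compactin_euclidean_iff)
  then show ?thesis by (simp add: euclidean_product_topology compactin_euclidean_iff)
qed

lemma independent_lincomb_norm_ge:
  fixes B :: "'a::real_normed_vector set"
  assumes fin: "finite B" and ind: "independent B"
  obtains m where "m > 0" "\<And>c. m * (\<Sum>b\<in>B. \<bar>c b\<bar>) \<le> norm (\<Sum>b\<in>B. c b *\<^sub>R b)"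
proof (cases "B = {}")
  case True then show ?thesis using that[of 1] by simp
next
  case False
  then obtain b1 where b1: "b1 \<in> B" by auto
  define K where "K = PiE UNIV (\<lambda>b. if b \<in> B then {-1..1} else {0::real}) \<inter> {c. (\<Sum>b\<in>B. \<bar>c b\<bar>) = 1}"
  have "closed {c::'a \<Rightarrow> real. (\<Sum>b\<in>B. \<bar>c b\<bar>) = 1}"
    by (rule closed_Collect_eq) (intro continuous_intros; auto)+
  then have K: "compact K" unfolding K_def
    using compact_coefficient_box[of B 1] by (intro compact_Int_closed) auto
  have "(\<lambda>b. if b = b1 then 1 else 0) \<in> K"
    unfolding K_def using b1 fin by (auto simp: if_distrib cong: if_cong)
  then have K_ne: "K \<noteq> {}" by auto
  have "continuous_on K (\<lambda>c. norm (\<Sum>b\<in>B. c b *\<^sub>R b))"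
    by (intro continuous_intros continuous_on_subset[OF continuous_on_product_coordinates]) auto
  from continuous_attains_inf[OF K K_ne this] obtain c0 where c0: "c0 \<in> K"
    and c0_min: "\<And>c. c \<in> K \<Longrightarrow> norm (\<Sum>b\<in>B. c0 b *\<^sub>R b) \<le> norm (\<Sum>b\<in>B. c b *\<^sub>R b)"
    by blast
  define m where "m = norm (\<Sum>b\<in>B. c0 b *\<^sub>R b)"
  have "m > 0"
  proof (rule ccontr)
    assume "\<not> m > 0"
    then have "(\<Sum>b\<in>B. c0 b *\<^sub>R b) = 0" unfolding m_def by simp
    then have "\<forall>b\<in>B. c0 b = 0"
      using ind fin unfolding dependent_finite[OF fin] by blast
    then show False using c0 unfolding K_def by simp
  qed
  moreover have "m * (\<Sum>b\<in>B. \<bar>c b\<bar>) \<le> norm (\<Sum>b\<in>B. c b *\<^sub>R b)" for c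
  proof (cases "(\<Sum>b\<in>B. \<bar>c b\<bar>) = 0")
    case False
    define s where "s = (\<Sum>b\<in>B. \<bar>c b\<bar>)"
    have s: "s > 0" using False unfolding s_def by (metis sum_nonneg abs_ge_zero order_le_less)
    define c' where "c' = (\<lambda>b. if b \<in> B then c b / s else 0)"
    have "\<bar>c b\<bar> \<le> s" if "b \<in> B" for b
      unfolding s_def using fin that by (intro member_le_sum) auto
    then have "c' \<in> PiE UNIV (\<lambda>b. if b \<in> B then {-1..1} else {0})"
      using s by (force simp: c'_def PiE_def abs_le_iff divide_le_eq le_divide_eq)
    moreover have "(\<Sum>b\<in>B. \<bar>c' b\<bar>) = (\<Sum>b\<in>B. \<bar>c b\<bar>) / s"
      unfolding sum_divide_distrib using s by (intro sum.cong) (auto simp: c'_def)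
    ultimately have "m \<le> norm (\<Sum>b\<in>B. c' b *\<^sub>R b)"
      unfolding m_def using s by (intro c0_min) (simp add: K_def s_def)
    also have "(\<Sum>b\<in>B. c' b *\<^sub>R b) = (1 / s) *\<^sub>R (\<Sum>b\<in>B. c b *\<^sub>R b)"
      unfolding scaleR_sum_right by (rule sum.cong) (auto simp: c'_def)
    finally show ?thesis using s unfolding s_def[symmetric] by (simp add: field_simps)
  qed simp
  ultimately show ?thesis using that by blast
qed

lemma finite_net_unit_sphere_span:
  fixes B :: "'a::real_normed_vector set"
  assumes "finite B" "d > 0"
  obtains N where "finite N" "\<And>T. T \<in> span B \<Longrightarrow> norm T = 1 \<Longrightarrow> \<exists>S\<in>N. norm (T - S) < d"
proof -
  obtain B0 where B0: "B0 \<subseteq> B" "independent B0" "B \<subseteq> span B0"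
    by (rule maximal_independent_subset[of B]) blast
  have fin0: "finite B0" using B0(1) assms(1) finite_subset by blast
  have span_B: "span B = span B0" using B0 by (metis span_mono span_span subset_antisym)
  obtain m where m: "m > 0" "\<And>c. m * (\<Sum>b\<in>B0. \<bar>c b\<bar>) \<le> norm (\<Sum>b\<in>B0. c b *\<^sub>R b)"
    using independent_lincomb_norm_ge[OF fin0 B0(2)] by blast
  define K where "K = PiE UNIV (\<lambda>b. if b \<in> B0 then {-(1/m)..1/m} else {0::real})"
  define lincomb where "lincomb c = (\<Sum>b\<in>B0. c b *\<^sub>R b)" for c :: "'a \<Rightarrow> real"
  have compact: "compact (lincomb ` K)" unfolding K_def lincomb_def
    by (intro compact_continuous_image compact_coefficient_box continuous_intros
        continuous_on_subset[OF continuous_on_product_coordinates]) auto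
  obtain N where N: "finite N" "lincomb ` K \<subseteq> (\<Union>S\<in>N. ball S d)"
    by (rule compactE_image[OF compact, of "lincomb ` K" "\<lambda>S. ball S d"]) (use assms(2) in auto)
  have "\<exists>S\<in>N. norm (T - S) < d" if T: "T \<in> span B" "norm T = 1" for T
  proof -
    obtain u where u: "T = (\<Sum>b\<in>B0. u b *\<^sub>R b)"
      using T(1) unfolding span_B span_finite[OF fin0] by blast
    define c where "c b = (if b \<in> B0 then u b else 0)" for b
    have "m * (\<Sum>b\<in>B0. \<bar>u b\<bar>) \<le> 1" using m(2)[of u] u T(2) by simp
    then have "(\<Sum>b\<in>B0. \<bar>u b\<bar>) \<le> 1 / m" using m(1) by (simp add: field_simps)
    then have "\<bar>u b\<bar> \<le> 1 / m" if "b \<in> B0" for b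
      using member_le_sum[of b B0 "\<lambda>b. \<bar>u b\<bar>"] that fin0 by auto
    then have "c \<in> K" unfolding K_def c_def by (force simp: PiE_def abs_le_iff)
    moreover have "T = lincomb c" unfolding u lincomb_def c_def by (rule sum.cong) auto
    ultimately obtain S where "S \<in> N" "T \<in> ball S d" using N(2) by blast
    then show ?thesis by (auto simp: dist_norm norm_minus_commute)
  qed
  then show ?thesis using N(1) that by blast
qed

lemma linf_norm_ge: "i < n \<Longrightarrow> \<bar>a i\<bar> \<le> linf_norm n a"
  unfolding linf_norm_def by (rule Max_ge) (auto simp: setcompr_eq_image)

lemma linf_norm_le: "0 \<le> M \<Longrightarrow> (\<And>i. i < n \<Longrightarrow> \<bar>a i\<bar> \<le> M) \<Longrightarrow> linf_norm n a \<le> M"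
  unfolding linf_norm_def by (subst Max_le_iff) (auto simp: setcompr_eq_image)

lemma linf_op_scale: "linf_op n x (\<lambda>j. c * a j) = c *\<^sub>R linf_op n x a"
  unfolding linf_op_def scaleR_sum_right by (simp add: scaleR_scaleR)

lemma blinfun_norm_almost_attained:
  fixes T :: "'a::real_normed_vector \<Rightarrow>\<^sub>L 'b::real_normed_vector"
  assumes "\<exists>y::'a. y \<noteq> 0" "d > 0"
  obtains y where "norm y = 1" "norm T - d \<le> norm (blinfun_apply T y)"
proof (rule ccontr)
  assume "\<not> thesis"
  with that have less: "\<And>y. norm y = 1 \<Longrightarrow> norm (blinfun_apply T y) < norm T - d"
    by force
  obtain y0 :: 'a where "y0 \<noteq> 0" using assms(1) by blast
  then have "norm ((1 / norm y0) *\<^sub>R y0) = 1" by simp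
  from less[OF this] have nonneg: "0 \<le> norm T - d" by (smt (verit) norm_ge_zero)
  have "norm (blinfun_apply T v) \<le> (norm T - d) * norm v" for v
  proof (cases "v = 0")
    case False
    then have "norm ((1 / norm v) *\<^sub>R v) = 1" by simp
    from less[OF this] have "norm (blinfun_apply T v) / norm v < norm T - d"
      by (simp add: blinfun.scaleR_right)
    then show ?thesis using False by (simp add: divide_less_eq)
  qed simp
  then have "norm T \<le> norm T - d" by (rule norm_blinfun_bound[OF nonneg])
  then show False using assms(2) by simp
qed

lemma exists_finite_rank_almost_l1_orthogonal:
  fixes x :: "nat \<Rightarrow> 'x::real_normed_vector" and y :: "nat \<Rightarrow> 'y::real_normed_vector"
  assumes x_bound: "\<And>a. norm (linf_op n x a) \<le> linf_norm n a"
    and x_l1: "\<And>a z. z \<in> Z \<Longrightarrow> (1 - d) * (norm z + linf_norm n a) \<le> norm (z + linf_op n x a)"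
    and "d \<le> 1" and y: "\<And>j. norm (y j) = 1"
  obtains S where "finite_rank S" "norm S \<le> 1"
    "\<And>i z c. i < n \<Longrightarrow> z \<in> Z \<Longrightarrow> (1 - d) * (norm z + \<bar>c\<bar>) \<le> norm (z + c *\<^sub>R blinfun_apply S (y i))"
proof -
  have "\<forall>j. \<exists>f. linear f \<and> (\<forall>v. \<bar>f v\<bar> \<le> norm v) \<and> f (y j) = 1"
    using exists_norming_functional y by metis
  then obtain F where F_linear: "\<And>j. linear (F j)" and F_le: "\<And>j v. \<bar>F j v\<bar> \<le> norm v"
    and F_y: "\<And>j. F j (y j) = 1"
    by metis
  define S where "S v = linf_op n x (\<lambda>j. F j v)" for v
  have S_le: "norm (S v) \<le> norm v" for v
    using x_bound[of "\<lambda>j. F j v"] linf_norm_le[of "norm v" n "\<lambda>j. F j v"] F_le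
    unfolding S_def by (meson norm_ge_zero order_trans)
  have "bounded_linear S"
  proof (rule bounded_linear_intro[where K = 1])
    show "S (u + v) = S u + S v" for u v
      unfolding S_def linf_op_def using F_linear
      by (simp add: linear_add scaleR_add_left sum.distrib)
    show "S (r *\<^sub>R v) = r *\<^sub>R S v" for r v
      unfolding S_def linf_op_def using F_linear by (simp add: linear_scale scaleR_sum_right)
    show "norm (S v) \<le> norm v * 1" for v using S_le by simp
  qed
  then have S_apply: "blinfun_apply (Blinfun S) = S" by (rule bounded_linear_Blinfun_apply)
  show ?thesis
  proof
    show "finite_rank (Blinfun S)"
      unfolding finite_rank_def S_apply
    proof (intro exI conjI)
      show "range S \<subseteq> span (x ` {..<n})"
        unfolding S_def linf_op_def by (clarsimp, intro span_sum span_scale span_base) auto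
    qed simp
    show "norm (Blinfun S) \<le> 1"
      by (rule norm_blinfun_bound) (use S_le S_apply in auto)
  next
    fix i z c assume "i < n" "z \<in> Z"
    have "\<bar>c\<bar> \<le> linf_norm n (\<lambda>j. c * F j (y i))"
      using linf_norm_ge[OF \<open>i < n\<close>, of "\<lambda>j. c * F j (y i)"] F_y by simp
    then have "(1 - d) * (norm z + \<bar>c\<bar>) \<le> (1 - d) * (norm z + linf_norm n (\<lambda>j. c * F j (y i)))"
      using \<open>d \<le> 1\<close> by (intro mult_left_mono) auto
    also have "\<dots> \<le> norm (z + linf_op n x (\<lambda>j. c * F j (y i)))"
      using x_l1[OF \<open>z \<in> Z\<close>] .
    also have "linf_op n x (\<lambda>j. c * F j (y i)) = c *\<^sub>R blinfun_apply (Blinfun S) (y i)"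
      unfolding S_apply S_def by (rule linf_op_scale)
    finally show "(1 - d) * (norm z + \<bar>c\<bar>) \<le> norm (z + c *\<^sub>R blinfun_apply (Blinfun S) (y i))" .
  qed
qed

lemma exists_unit_operator_almost_l1_orthogonal:
  fixes N :: "('y::real_normed_vector \<Rightarrow>\<^sub>L 'x::real_normed_vector) set"
  assumes embed: "\<And>Z n. subspace (Z :: 'x set) \<Longrightarrow> fin_dim_subspace Z \<Longrightarrow> \<exists>x.
        (\<forall>a. norm (linf_op n x a) \<le> linf_norm n a) \<and>
        (\<forall>a. \<forall>z\<in>Z. (1 - d) * (norm z + linf_norm n a) \<le> norm (z + linf_op n x a))"
    and Y_nonzero: "\<exists>y::'y. y \<noteq> 0"
    and H: "subspace H" "{T. finite_rank T} \<subseteq> H"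
    and "finite N" "0 < d" "d < 1"
  obtains S where "S \<in> H" "norm S = 1"
    "\<And>T s. T \<in> N \<Longrightarrow> (1 - d) * (norm T - d + \<bar>s\<bar>) \<le> norm (T + s *\<^sub>R S)"
proof -
  have "\<exists>v. norm v = 1 \<and> norm T - d \<le> norm (blinfun_apply T v)" for T :: "'y \<Rightarrow>\<^sub>L 'x"
    using blinfun_norm_almost_attained[OF Y_nonzero \<open>0 < d\<close>, of T] by blast
  then obtain y :: "('y \<Rightarrow>\<^sub>L 'x) \<Rightarrow> 'y" where y: "\<And>T. norm (y T) = 1"
    and y_norming: "\<And>T. norm T - d \<le> norm (blinfun_apply T (y T))"
    by metis
  obtain ts where ts: "set ts = N" using finite_list[OF \<open>finite N\<close>] by blast
  define Z where "Z = span ((\<lambda>T. blinfun_apply T (y T)) ` N)"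
  have Z: "subspace Z" "fin_dim_subspace Z"
    unfolding Z_def fin_dim_subspace_def using \<open>finite N\<close> by auto
  \<comment> \<open>One coordinate more than \<open>length ts\<close>, so that \<open>S0\<close> below is seen to be nonzero even if \<open>N = {}\<close>.\<close>
  define n where "n = Suc (length ts)"
  obtain x where x: "\<And>a. norm (linf_op n x a) \<le> linf_norm n a"
    "\<And>a z. z \<in> Z \<Longrightarrow> (1 - d) * (norm z + linf_norm n a) \<le> norm (z + linf_op n x a)"
    using embed[OF Z] by blast
  obtain S0 where S0: "finite_rank S0" "norm S0 \<le> 1"
    and S0_l1: "\<And>i z c. i < n \<Longrightarrow> z \<in> Z \<Longrightarrow>
        (1 - d) * (norm z + \<bar>c\<bar>) \<le> norm (z + c *\<^sub>R blinfun_apply S0 (y (ts ! i)))"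
    by (rule exists_finite_rank_almost_l1_orthogonal[of n x Z d "\<lambda>j. y (ts ! j)"])
      (use x \<open>d < 1\<close> y in auto)
  have "1 - d \<le> norm (blinfun_apply S0 (y (ts ! 0)))"
    using S0_l1[of 0 0 1] subspace_0[OF Z(1)] by (simp add: n_def)
  also have "\<dots> \<le> norm S0" using norm_blinfun[of S0 "y (ts ! 0)"] y by simp
  finally have S0_pos: "0 < norm S0" using \<open>d < 1\<close> by linarith
  show ?thesis
  proof
    show "(1 / norm S0) *\<^sub>R S0 \<in> H" using S0(1) H by (blast intro: subspace_scale)
    show "norm ((1 / norm S0) *\<^sub>R S0) = 1" using S0_pos by simp
  next
    fix T s assume "T \<in> N"
    then obtain i where i: "i < length ts" "T = ts ! i" using ts by (auto simp: in_set_conv_nth)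
    have "\<bar>s\<bar> \<le> \<bar>s / norm S0\<bar>"
      using S0_pos S0(2) by (simp add: abs_div le_divide_eq mult_left_le)
    then have "(1 - d) * (norm T - d + \<bar>s\<bar>) \<le> (1 - d) * (norm (blinfun_apply T (y T)) + \<bar>s / norm S0\<bar>)"
      using y_norming[of T] \<open>d < 1\<close> by (intro mult_left_mono) auto
    also have "\<dots> \<le> norm (blinfun_apply T (y T) + (s / norm S0) *\<^sub>R blinfun_apply S0 (y T))"
      using S0_l1[of i "blinfun_apply T (y T)" "s / norm S0"] i \<open>T \<in> N\<close>
      by (simp add: n_def Z_def span_base)
    also have "\<dots> = norm (blinfun_apply (T + s *\<^sub>R ((1 / norm S0) *\<^sub>R S0)) (y T))"
      by (simp add: blinfun.add_left blinfun.scaleR_left)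
    also have "\<dots> \<le> norm (T + s *\<^sub>R ((1 / norm S0) *\<^sub>R S0))"
      using norm_blinfun[of _ "y T"] y by simp
    finally show "(1 - d) * (norm T - d + \<bar>s\<bar>) \<le> norm (T + s *\<^sub>R ((1 / norm S0) *\<^sub>R S0))" .
  qed
qed

lemma octahedral_unit_sphereI:
  assumes "\<And>E \<epsilon>. E \<subseteq> H \<Longrightarrow> fin_dim_subspace E \<Longrightarrow> 0 < \<epsilon> \<Longrightarrow> \<epsilon> \<le> 1 \<Longrightarrow> \<exists>y\<in>H. norm y = 1 \<and>
      (\<forall>x\<in>E. norm x = 1 \<longrightarrow> (\<forall>t. (1 - \<epsilon>) * (1 + \<bar>t\<bar>) \<le> norm (x + t *\<^sub>R y)))"
  shows "octahedral H"
  unfolding octahedral_def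
proof (intro allI impI)
  fix E and \<epsilon> :: real
  assume E: "E \<subseteq> H \<and> fin_dim_subspace E \<and> 0 < \<epsilon>"
  then have "subspace E" by (auto simp: fin_dim_subspace_def)
  define e where "e = min \<epsilon> 1"
  obtain y where y: "y \<in> H" "norm y = 1"
    and unit: "\<And>x t. x \<in> E \<Longrightarrow> norm x = 1 \<Longrightarrow> (1 - e) * (1 + \<bar>t\<bar>) \<le> norm (x + t *\<^sub>R y)"
    using assms[of E e] E by (auto simp: e_def)
  have "(1 - \<epsilon>) * (norm x + \<bar>t\<bar>) \<le> norm (x + t *\<^sub>R y)" if "x \<in> E" for x t
  proof (cases "x = 0")
    case True
    then show ?thesis using E y(2) mult_right_mono[of "1 - \<epsilon>" 1 "\<bar>t\<bar>"] by simp
  next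
    case False
    have "(1 / norm x) *\<^sub>R x \<in> E" using \<open>subspace E\<close> that by (rule subspace_scale)
    from unit[OF this, of "t / norm x"]
    have "(1 - e) * (1 + \<bar>t / norm x\<bar>) \<le> norm ((1 / norm x) *\<^sub>R x + (t / norm x) *\<^sub>R y)"
      using False by simp
    also have "(1 / norm x) *\<^sub>R x + (t / norm x) *\<^sub>R y = (1 / norm x) *\<^sub>R (x + t *\<^sub>R y)"
      by (simp add: scaleR_add_right)
    also have "norm \<dots> = norm (x + t *\<^sub>R y) / norm x" by simp
    finally have "(1 - e) * (1 + \<bar>t\<bar> / norm x) * norm x \<le> norm (x + t *\<^sub>R y)"
      using False by (simp add: le_divide_eq abs_div)
    moreover have "(1 - e) * (1 + \<bar>t\<bar> / norm x) * norm x = (1 - e) * (norm x + \<bar>t\<bar>)"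
      using False by (simp add: field_simps)
    moreover have "(1 - \<epsilon>) * (norm x + \<bar>t\<bar>) \<le> (1 - e) * (norm x + \<bar>t\<bar>)"
      by (intro mult_right_mono) (auto simp: e_def)
    ultimately show ?thesis by linarith
  qed
  then show "\<exists>y\<in>H. norm y = 1 \<and> (\<forall>x\<in>E. \<forall>t. (1 - \<epsilon>) * (norm x + \<bar>t\<bar>) \<le> norm (x + t *\<^sub>R y))"
    using y by blast
qed

theorem theorem3p6:
  fixes H :: "('y::banach \<Rightarrow>\<^sub>L 'x::banach) set"
  assumes hyp: "\<forall>\<epsilon>>0. \<forall>Z::'x set. \<forall>n::nat. subspace Z \<and> fin_dim_subspace Z \<longrightarrow>
      (\<exists>x::nat \<Rightarrow> 'x.
         (\<forall>a. norm (linf_op n x a) \<le> linf_norm n a) \<and>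
         (\<forall>a. \<forall>z\<in>Z. norm (z + linf_op n x a) \<ge> (1 - \<epsilon>) * (norm z + linf_norm n a)))"
    and Y_nonzero: "\<exists>y::'y. y \<noteq> 0"
    and H_sub: "subspace H"
    and H_closed: "closed H"
    and H_fin: "{T. finite_rank T} \<subseteq> H"
  shows "octahedral H"
proof (rule octahedral_unit_sphereI)
  fix E and \<epsilon> :: real
  assume "E \<subseteq> H" "fin_dim_subspace E" "0 < \<epsilon>" "\<epsilon> \<le> 1"
  then obtain B where "finite B" and E: "E = span B" by (auto simp: fin_dim_subspace_def)
  define d where "d = \<epsilon> / 8"
  have d: "0 < d" "d < 1" using \<open>0 < \<epsilon>\<close> \<open>\<epsilon> \<le> 1\<close> by (auto simp: d_def)
  obtain N where "finite N" and net: "\<And>T. T \<in> E \<Longrightarrow> norm T = 1 \<Longrightarrow> \<exists>S\<in>N. norm (T - S) < d"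
    using finite_net_unit_sphere_span[OF \<open>finite B\<close> d(1)] E by blast
  obtain S where "S \<in> H" "norm S = 1"
    and S: "\<And>T s. T \<in> N \<Longrightarrow> (1 - d) * (norm T - d + \<bar>s\<bar>) \<le> norm (T + s *\<^sub>R S)"
    using exists_unit_operator_almost_l1_orthogonal[OF _ Y_nonzero H_sub H_fin \<open>finite N\<close> d] hyp d(1)
    by (metis (no_types, lifting))
  have "(1 - \<epsilon>) * (1 + \<bar>t\<bar>) \<le> norm (T + t *\<^sub>R S)" if T: "T \<in> E" "norm T = 1" for T t
  proof -
    obtain T' where "T' \<in> N" and T': "norm (T - T') < d" using net[OF T] by blast
    have "1 \<le> norm T' + d" using norm_triangle_ineq[of "T - T'" T'] T' T(2) by simp
    have "(1 - \<epsilon>) * (1 + \<bar>t\<bar>) \<le> (1 - d) * (1 - 2 * d + \<bar>t\<bar>) - d"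
      using d by (simp add: d_def algebra_simps)
    also have "\<dots> \<le> (1 - d) * (norm T' - d + \<bar>t\<bar>) - d"
      using \<open>1 \<le> norm T' + d\<close> d by (intro diff_right_mono mult_left_mono) auto
    also have "\<dots> \<le> norm (T' + t *\<^sub>R S) - norm (T - T')"
      using S[OF \<open>T' \<in> N\<close>, of t] T' by simp
    also have "\<dots> \<le> norm (T + t *\<^sub>R S)"
      using norm_triangle_ineq[of "T + t *\<^sub>R S" "T' - T"] by (simp add: algebra_simps norm_minus_commute)
    finally show ?thesis .
  qed
  then show "\<exists>S\<in>H. norm S = 1 \<and> (\<forall>T\<in>E. norm T = 1 \<longrightarrow> (\<forall>t. (1 - \<epsilon>) * (1 + \<bar>t\<bar>) \<le> norm (T + t *\<^sub>R S)))"
    using \<open>S \<in> H\<close> \<open>norm S = 1\<close> by blast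
qed

end
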